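(* Assume $K(i,j)=\phi(i)\wedge\phi(j)$ with $\phi$ positive and increasing. Then for all $n\ge2$ and $i\ge1$, $T_i^{n\mathbf e_i}$ has the same law as $\frac{\phi(1)}{\phi(i)}T_1^{n\mathbf e_1}$.
   Context: $\ell^1_{\mathbb N}$ is the set of summable sequences of nonnegative integers, and $\mathbf e_i$ are the canonical unit sequences. For $X\ne0$ let $\ell_X=\min\{i:X_i>0\}$. The stochastic min-driven coagulation process $X(t)$ started from $X_0$ is the continuous-time Markov chain whose only transitions from state $X$ are: - to $X-\mathbf e_{\ell_X}-\mathbf e_j+\mathbf e_{\ell_X+j}$ at rate $K(\ell_X,j)X_j$ for $j>\ell_X$; - to $X-2\mathbf e_{\ell_X}+\mathbf e_{2\ell_X}$ at rate $K(\ell_X,\ell_X)(X_{\ell_X}-1)$. $T^{X_0}_i=\inf\{t>0:X_1(t)=\dots=X_i(t)=0\}$ for the process started from $X_0$. Thus $T_i^{n\mathbf e_i}$ is the first time all particles of size $\le i$ have disappeared, for the process started with $n$ particles of size $i$. *)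

theory Defs
  imports "HOL-Probability.Probability"
begin

text \<open>States: sequences of nonnegative integers indexed by sizes 1,2,...;
  the entry at index 0 is unused. \<open>X k\<close> = number of particles of size k.\<close>
type_synonym state = "nat \<Rightarrow> nat"

definition in_l1N :: "state \<Rightarrow> bool" where
  "in_l1N X \<longleftrightarrow> finite {k. 0 < X k} \<and> X 0 = 0"

definition unit_seq :: "nat \<Rightarrow> state" ("\<e>") where
  "\<e> i = (\<lambda>k. if k = i then 1 else 0)"

definition scale_seq :: "nat \<Rightarrow> state \<Rightarrow> state" where
  "scale_seq n X = (\<lambda>k. n * X k)"

text \<open>Smallest occupied size \<open>\<ell>_X\<close> (meaningful for X \<noteq> 0).\<close>
definition ellX :: "state \<Rightarrow> nat" where
  "ellX X = (LEAST i. 0 < X i)"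

definition npart :: "state \<Rightarrow> nat" where
  "npart X = (\<Sum>k\<in>{k. 0 < X k}. X k)"

text \<open>Target of the transition merging a particle of size \<open>\<ell>\<close> with one of size \<open>j\<close>:
  \<open>X - e_\<ell> - e_j + e_(\<ell>+j)\<close> (for \<open>j = \<ell>\<close> this is \<open>X - 2 e_\<ell> + e_(2\<ell>)\<close>).\<close>
definition merge :: "state \<Rightarrow> nat \<Rightarrow> nat \<Rightarrow> state" where
  "merge X l j = (\<lambda>k. X k - (if k = l then 1 else 0) - (if k = j then 1 else 0)
                       + (if k = l + j then 1 else 0))"

text \<open>Transition rate from X to Y of the min-driven coagulation process with kernel K.\<close>
definition rate :: "(nat \<Rightarrow> nat \<Rightarrow> real) \<Rightarrow> state \<Rightarrow> state \<Rightarrow> real" where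
  "rate K X Y =
     (let l = ellX X in
       (\<Sum>j\<in>{j. l < j \<and> 0 < X j \<and> Y = merge X l j}. K l j * real (X j))
       + (if 2 \<le> X l \<and> Y = merge X l l then K l l * (real (X l) - 1) else 0))"

definition total_rate :: "(nat \<Rightarrow> nat \<Rightarrow> real) \<Rightarrow> state \<Rightarrow> real" where
  "total_rate K X =
     (let l = ellX X in
       (\<Sum>j\<in>{j. l < j \<and> 0 < X j}. K l j * real (X j)) + K l l * (real (X l) - 1))"

text \<open>Jump-hold construction of the law of the hitting time of the set A:
  if A holds the hitting time is 0; otherwise wait an Exp(q) holding time,
  jump to Y with probability rate/q, and add the (independent) hitting time from Y.
  If q = 0 and A fails, the state is absorbing and the hitting time is \<open>\<infinity>\<close>,
  which carries no mass on the real line (the law is a sub-probability measure on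
  \<real>, the missing mass being P(T = \<infinity>)).
  The fuel parameter bounds the number of jumps.\<close>
primrec hit_law :: "(nat \<Rightarrow> nat \<Rightarrow> real) \<Rightarrow> (state \<Rightarrow> bool) \<Rightarrow> nat \<Rightarrow> state \<Rightarrow> real measure" where
  "hit_law K A 0 X = (if A X then return borel 0 else null_measure borel)"
| "hit_law K A (Suc f) X =
     (if A X then return borel 0
      else if total_rate K X \<le> 0 then null_measure borel
      else density lborel (exponential_density (total_rate K X)) \<star>
           (density (count_space UNIV) (\<lambda>Y. ennreal (rate K X Y / total_rate K X))
              \<bind> (\<lambda>Y. hit_law K A f Y)))"

text \<open>Law of \<open>T_i^{X}\<close>: every transition lowers the particle number by one,
  so from X at most \<open>npart X\<close> jumps can occur and the fuel \<open>npart X\<close> never truncates.\<close>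
definition T_law :: "(nat \<Rightarrow> nat \<Rightarrow> real) \<Rightarrow> nat \<Rightarrow> state \<Rightarrow> real measure" where
  "T_law K i X = hit_law K (\<lambda>Y. \<forall>k\<in>{1..i}. Y k = 0) (npart X) X"

end

theory Submission
  imports Defs
begin

(* With K(a,b) = min (phi a) (phi b) and phi increasing, the process started
   from n particles of size i behaves exactly like the process started from n
   particles of size 1, with every size multiplied by i and every rate
   multiplied by phi i / phi 1.  Formally, dilating a state Y by i
   (emb i Y puts Y m particles at size i*m) maps states with smallest size 1
   to states with smallest size i, maps transitions to transitions, and
   multiplies all jump rates (hence the total rate) by phi i / phi 1, so the
   jump distribution is the image of the original one under the dilation.

   The theorem
   is the instance where the dilated state n e_i is the dilation of n e_1. *)

section \<open>Scaling real measures\<close>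

lemma exponential_density_scale:
  assumes c: "0 < c" and q: "0 < q"
  shows "distr (density lborel (\<lambda>x. ennreal (exponential_density q x))) borel (\<lambda>t. c * t)
       = density lborel (\<lambda>x. ennreal (exponential_density (q / c) x))"
proof (rule measure_eqI)
  fix A assume "A \<in> sets (distr (density lborel (\<lambda>x. ennreal (exponential_density q x))) borel (\<lambda>t. c * t))"
  then have A[measurable]: "A \<in> sets borel" by simp
  have "(\<lambda>t::real. c * t) \<in> borel_measurable borel" by measurable
  from measurable_sets[OF this A] have preA: "(\<lambda>t::real. c * t) -` A \<in> sets borel" by simp
  have dens: "ennreal c * (ennreal (exponential_density (q / c) (c * x)) * indicator A (c * x))
      = ennreal (exponential_density q x) * indicator ((\<lambda>t. c * t) -` A) x" for x :: real
  proof -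
    have "c * exponential_density (q / c) (c * x) = exponential_density q x"
      using c by (auto simp: exponential_density_def mult_less_0_iff)
    then show ?thesis
      using c q by (auto simp: indicator_def ennreal_mult[symmetric] exponential_density_def mult_less_0_iff)
  qed
  have "emeasure (density lborel (\<lambda>x. ennreal (exponential_density (q / c) x))) A
      = (\<integral>\<^sup>+y. ennreal (exponential_density (q / c) y) * indicator A y \<partial>lborel)"
    by (simp add: emeasure_density)
  also have "\<dots> = \<bar>c\<bar> * (\<integral>\<^sup>+x. ennreal (exponential_density (q / c) (0 + c * x)) * indicator A (0 + c * x) \<partial>lborel)"
    by (rule nn_integral_real_affine) (use c in auto)
  also have "\<dots> = (\<integral>\<^sup>+x. ennreal c * (ennreal (exponential_density (q / c) (c * x)) * indicator A (c * x)) \<partial>lborel)"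
    using c by (subst nn_integral_cmult) auto
  also have "\<dots> = (\<integral>\<^sup>+x. ennreal (exponential_density q x) * indicator ((\<lambda>t. c * t) -` A) x \<partial>lborel)"
    by (simp add: dens)
  also have "\<dots> = emeasure (distr (density lborel (\<lambda>x. ennreal (exponential_density q x))) borel (\<lambda>t. c * t)) A"
    using preA by (simp add: emeasure_distr emeasure_density)
  finally show "emeasure (distr (density lborel (\<lambda>x. ennreal (exponential_density q x))) borel (\<lambda>t. c * t)) A
      = emeasure (density lborel (\<lambda>x. ennreal (exponential_density (q / c) x))) A" by simp
qed simp

text \<open>Scaling is linear, hence commutes with the convolution of finite measures.\<close>
lemma convolution_scale:
  fixes E B :: "real measure"
  assumes fE: "finite_measure E" and fB: "finite_measure B"
    and [measurable_cong]: "sets E = sets borel" "sets B = sets borel"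
  shows "distr (E \<star> B) borel (\<lambda>t. c * t) = (distr E borel (\<lambda>t. c * t) \<star> distr B borel (\<lambda>t. c * t))"
proof -
  have sf: "sigma_finite_measure (distr B borel (\<lambda>t. c * t))"
    using finite_measure.finite_measure_distr[OF fB, of "\<lambda>t. c * t" borel]
    by (auto intro: finite_measure.sigma_finite_measure)
  have pair: "distr E borel (\<lambda>t. c * t) \<Otimes>\<^sub>M distr B borel (\<lambda>t. c * t)
      = distr (E \<Otimes>\<^sub>M B) (borel \<Otimes>\<^sub>M borel) (\<lambda>(x, y). (c * x, c * y))"
    by (rule pair_measure_distr) (auto intro: sf)
  have "(distr E borel (\<lambda>t. c * t) \<star> distr B borel (\<lambda>t. c * t))
      = distr (distr (E \<Otimes>\<^sub>M B) (borel \<Otimes>\<^sub>M borel) (\<lambda>(x, y). (c * x, c * y))) borel (\<lambda>(x, y). x + y)"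
    unfolding convolution_def pair ..
  also have "\<dots> = distr (E \<Otimes>\<^sub>M B) borel ((\<lambda>(x, y). x + y) \<circ> (\<lambda>(x, y). (c * x, c * y)))"
    by (rule distr_distr) auto
  also have "\<dots> = distr (E \<Otimes>\<^sub>M B) borel ((\<lambda>t. c * t) \<circ> (\<lambda>(x, y). x + y))"
    by (rule distr_cong) (auto simp: distrib_left)
  also have "\<dots> = distr (E \<star> B) borel (\<lambda>t. c * t)"
    unfolding convolution_def by (rule distr_distr[symmetric]) auto
  finally show ?thesis by simp
qed

lemma distr_null_measure_borel:
  "f \<in> borel_measurable (borel :: real measure) \<Longrightarrow> distr (null_measure borel) borel f = null_measure borel"
  by (rule measure_eqI) (auto simp: emeasure_distr)

lemma distr_return_zero_scale: "distr (return (borel :: real measure) 0) borel (\<lambda>t. c * t) = return borel 0"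
  by (subst distr_return) auto

lemma convolution_subprob_space:
  fixes E B :: "real measure"
  assumes E: "prob_space E" and B: "subprob_space B"
    and sE: "sets E = sets borel" and sB: "sets B = sets borel"
  shows "subprob_space (E \<star> B)"
proof -
  interpret B: subprob_space B by fact
  interpret E: prob_space E by fact
  have spE: "space E = UNIV" using sets_eq_imp_space_eq[OF sE] by simp
  have spB: "space B = UNIV" using sets_eq_imp_space_eq[OF sB] by simp
  have "subprob_space (E \<Otimes>\<^sub>M B)"
  proof (rule subprob_spaceI)
    have "emeasure (E \<Otimes>\<^sub>M B) (space (E \<Otimes>\<^sub>M B)) = emeasure E (space E) * emeasure B (space B)"
      by (simp add: space_pair_measure B.emeasure_pair_measure_Times)
    also have "\<dots> \<le> 1" using B.emeasure_space_le_1 by (simp add: E.emeasure_space_1)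
    finally show "emeasure (E \<Otimes>\<^sub>M B) (space (E \<Otimes>\<^sub>M B)) \<le> 1" .
    show "space (E \<Otimes>\<^sub>M B) \<noteq> {}" by (simp add: space_pair_measure spE spB)
  qed
  then show ?thesis
    unfolding convolution_def
  proof (rule subprob_space.subprob_space_distr)
    note [measurable_cong] = sE sB
    show "(\<lambda>(x, y). x + y) \<in> measurable (E \<Otimes>\<^sub>M B) (borel :: real measure)" by measurable
  qed simp
qed

lemma bind_density_count_space_cong:
  fixes g :: "'a \<Rightarrow> ennreal"
  assumes "\<And>Z. g Z \<noteq> 0 \<Longrightarrow> F Z = G Z" "\<And>Z. sets (F Z) = sets N" "\<And>Z. sets (G Z) = sets N"
  shows "density (count_space UNIV) g \<bind> F = density (count_space UNIV) g \<bind> G"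
proof -
  let ?M = "density (count_space UNIV) g"
  have pre: "emeasure ?M (F -` B) = emeasure ?M (G -` B)" for B
  proof -
    have "g x * indicator (F -` B) x = g x * indicator (G -` B) x" for x
      using assms(1)[of x] by (cases "g x = 0") (auto simp: indicator_def)
    then show ?thesis by (simp add: emeasure_density)
  qed
  have "subprob_algebra (F x) = subprob_algebra N" "subprob_algebra (G x) = subprob_algebra N" for x
    using assms(2,3) by (auto intro: subprob_algebra_cong)
  then show ?thesis
    by (simp add: bind_nonempty distr_def pre)
qed

lemma density_count_space_inj_image:
  fixes g :: "'b \<Rightarrow> ennreal" and e :: "'a \<Rightarrow> 'b"
  assumes inj: "inj e" and out: "\<And>Z. Z \<notin> range e \<Longrightarrow> g Z = 0" and eq: "\<And>Z0. g (e Z0) = h Z0"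
  shows "density (count_space UNIV) g = distr (density (count_space UNIV) h) (count_space UNIV) e"
proof (rule measure_eqI)
  fix A assume "A \<in> sets (density (count_space UNIV) g)"
  have "emeasure (distr (density (count_space UNIV) h) (count_space UNIV) e) A
      = (\<integral>\<^sup>+Z0. h Z0 * indicator (e -` A) Z0 \<partial>count_space UNIV)"
    by (simp add: emeasure_distr emeasure_density)
  also have "\<dots> = (\<integral>\<^sup>+Z0. (\<lambda>Z. g Z * indicator A Z) (e Z0) \<partial>count_space UNIV)"
    by (simp add: eq indicator_def)
  also have "\<dots> = (\<integral>\<^sup>+Z. g Z * indicator A Z \<partial>count_space (range e))"
    by (rule nn_integral_bij_count_space) (use inj in \<open>simp add: bij_betw_def\<close>)
  also have "\<dots> = (\<integral>\<^sup>+Z. g Z * indicator A Z * indicator (range e) Z \<partial>count_space UNIV)"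
    by (rule nn_integral_count_space_indicator) simp
  also have "\<dots> = (\<integral>\<^sup>+Z. g Z * indicator A Z \<partial>count_space UNIV)"
    by (intro nn_integral_cong) (auto simp: indicator_def out)
  also have "\<dots> = emeasure (density (count_space UNIV) g) A"
    by (simp add: emeasure_density)
  finally show "emeasure (density (count_space UNIV) g) A =
      emeasure (distr (density (count_space UNIV) h) (count_space UNIV) e) A" ..
qed simp

section \<open>The jump-hold construction\<close>

definition jump_dist :: "(nat \<Rightarrow> nat \<Rightarrow> real) \<Rightarrow> state \<Rightarrow> state measure" where
  "jump_dist K X = density (count_space UNIV) (\<lambda>Y. ennreal (rate K X Y / total_rate K X))"

lemma hit_law_Suc:
  "hit_law K A (Suc f) X =
     (if A X then return borel 0
      else if total_rate K X \<le> 0 then null_measure borel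
      else density lborel (\<lambda>x. ennreal (exponential_density (total_rate K X) x)) \<star>
           (jump_dist K X \<bind> hit_law K A f))"
  by (simp add: jump_dist_def)

declare hit_law.simps(2)[simp del]

lemma hit_law_stopped: "A X \<Longrightarrow> hit_law K A f X = return borel 0"
  by (cases f) (simp_all add: hit_law_Suc)

lemma hit_law_Suc_absorbed:
  "total_rate K X \<le> 0 \<Longrightarrow> \<not> A X \<Longrightarrow> hit_law K A (Suc f) X = null_measure borel"
  by (simp add: hit_law_Suc)

lemma hit_law_Suc_active:
  "0 < total_rate K X \<Longrightarrow> \<not> A X \<Longrightarrow> hit_law K A (Suc f) X =
     (density lborel (\<lambda>x. ennreal (exponential_density (total_rate K X) x)) \<star>
      (jump_dist K X \<bind> hit_law K A f))"
  by (simp add: hit_law_Suc)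

lemma sets_hit_law[simp]: "sets (hit_law K A f X) = sets borel"
proof (induction f arbitrary: X)
  case (Suc f)
  have "sets (jump_dist K X \<bind> hit_law K A f) = sets borel"
    by (rule sets_bind) (auto simp: Suc.IH jump_dist_def)
  then show ?case by (simp add: hit_law_Suc)
qed simp

lemma sets_jump_dist_bind_hit_law[simp]: "sets (jump_dist K X \<bind> hit_law K A f) = sets borel"
  by (rule sets_bind) (auto simp: jump_dist_def)

lemma ellX_props:
  assumes "in_l1N X" "X \<noteq> (\<lambda>_. 0)"
  shows "0 < X (ellX X)" "1 \<le> ellX X" "\<And>k. 0 < X k \<Longrightarrow> ellX X \<le> k"
proof -
  obtain k where k: "0 < X k" using assms(2) by auto
  show *: "0 < X (ellX X)" unfolding ellX_def by (rule LeastI[of _ k]) (rule k)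
  then show "1 \<le> ellX X"
    using assms(1) by (cases "ellX X") (auto simp: in_l1N_def)
  show "\<And>k. 0 < X k \<Longrightarrow> ellX X \<le> k" unfolding ellX_def by (rule Least_le)
qed

lemma merge_in_l1N:
  assumes "in_l1N X" "1 \<le> l" "1 \<le> j"
  shows "in_l1N (merge X l j)"
proof -
  have "{k. 0 < merge X l j k} \<subseteq> insert (l + j) {k. 0 < X k}"
  proof
    fix k assume "k \<in> {k. 0 < merge X l j k}"
    then show "k \<in> insert (l + j) {k. 0 < X k}"
      by (cases "k = l + j") (auto simp: merge_def)
  qed
  then have "finite {k. 0 < merge X l j k}"
    by (rule finite_subset) (use assms(1) in \<open>simp add: in_l1N_def\<close>)
  moreover have "merge X l j 0 = 0" using assms by (simp add: merge_def in_l1N_def)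
  ultimately show ?thesis by (simp add: in_l1N_def)
qed

lemma rate_nonzero_cases:
  assumes "rate K X Z \<noteq> 0"
  obtains j where "ellX X \<le> j" "Z = merge X (ellX X) j"
proof (cases "Z = merge X (ellX X) (ellX X)")
  case False
  have "{j. ellX X < j \<and> 0 < X j \<and> Z = merge X (ellX X) j} \<noteq> {}"
  proof
    assume none: "{j. ellX X < j \<and> 0 < X j \<and> Z = merge X (ellX X) j} = {}"
    have "rate K X Z = 0" unfolding rate_def Let_def none using False by simp
    with assms show False by simp
  qed
  then show ?thesis using that by (auto intro: less_imp_le)
qed (use that in blast)

lemma rate_nonzero_in_l1N:
  assumes "rate K X Z \<noteq> 0" "in_l1N X" "X \<noteq> (\<lambda>_. 0)"
  shows "in_l1N Z"
proof -
  have "1 \<le> ellX X" using ellX_props[OF assms(2,3)] by simp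
  with assms(1,2) show ?thesis
    by (elim rate_nonzero_cases) (auto intro: merge_in_l1N)
qed

lemma rate_nonneg:
  assumes Kpos: "\<And>a b. 1 \<le> a \<Longrightarrow> 1 \<le> b \<Longrightarrow> 0 \<le> K a b"
    and X: "in_l1N X" "X \<noteq> (\<lambda>_. 0)"
  shows "0 \<le> rate K X Z"
proof -
  have "1 \<le> ellX X" using ellX_props[OF X] by simp
  then show ?thesis unfolding rate_def Let_def using Kpos
    by (intro add_nonneg_nonneg sum_nonneg) auto
qed

lemma rate_finite_support:
  assumes X: "in_l1N X" "X \<noteq> (\<lambda>_. 0)"
  obtains S where "finite S" "\<And>Z. Z \<notin> S \<Longrightarrow> rate K X Z = 0"
    "(\<Sum>Z\<in>S. rate K X Z) = total_rate K X"
proof -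
  define l where "l = ellX X"
  define J where "J = {j. l < j \<and> 0 < X j}"
  define m where "m = merge X l"
  define S where "S = m ` J \<union> {m l}"
  define d where "d = K l l * (real (X l) - 1)"
  have l1: "0 < X l" using ellX_props[OF X] by (auto simp: l_def)
  have fJ: "finite J" using X(1) unfolding J_def in_l1N_def by (auto intro: finite_subset)
  have fS: "finite S" using fJ by (simp add: S_def)
  have rate_eq: "rate K X Z = (\<Sum>j\<in>{j\<in>J. m j = Z}. K l j * real (X j))
      + (if Z = m l then (if 2 \<le> X l then d else 0) else 0)" for Z
  proof -
    have "{j. l < j \<and> 0 < X j \<and> Z = merge X l j} = {j\<in>J. m j = Z}"
      by (auto simp: J_def m_def)
    then show ?thesis unfolding rate_def Let_def l_def[symmetric] m_def d_def by auto
  qed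
  have "rate K X Z = 0" if "Z \<notin> S" for Z
  proof -
    have none: "{j\<in>J. m j = Z} = {}" using that by (auto simp: S_def)
    show ?thesis using that unfolding rate_eq none by (auto simp: S_def)
  qed
  moreover have "(\<Sum>Z\<in>S. rate K X Z) = total_rate K X"
  proof -
    have grp: "(\<Sum>Z\<in>S. \<Sum>j\<in>{j\<in>J. m j = Z}. K l j * real (X j)) = (\<Sum>j\<in>J. K l j * real (X j))"
      by (rule sum.group[OF fJ fS]) (auto simp: S_def)
    have diag: "(if 2 \<le> X l then d else 0) = d"
      using l1 by (auto simp: d_def)
    have "total_rate K X = (\<Sum>j\<in>J. K l j * real (X j)) + d"
      unfolding total_rate_def Let_def l_def[symmetric] J_def d_def ..
    then show ?thesis
      unfolding rate_eq sum.distrib grp using fS by (simp add: S_def diag)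
  qed
  ultimately show ?thesis using fS that by blast
qed

lemma prob_space_jump_dist:
  assumes Kpos: "\<And>a b. 1 \<le> a \<Longrightarrow> 1 \<le> b \<Longrightarrow> 0 \<le> K a b"
    and X: "in_l1N X" "X \<noteq> (\<lambda>_. 0)" and q: "0 < total_rate K X"
  shows "prob_space (jump_dist K X)"
proof
  obtain S where fS: "finite S" and out: "\<And>Z. Z \<notin> S \<Longrightarrow> rate K X Z = 0"
    and sumS: "(\<Sum>Z\<in>S. rate K X Z) = total_rate K X"
    using rate_finite_support[OF X, where K=K] by blast
  have nn: "0 \<le> rate K X Z / total_rate K X" for Z
    using rate_nonneg[OF Kpos X] q by simp
  have "emeasure (jump_dist K X) (space (jump_dist K X))
      = (\<integral>\<^sup>+Y. ennreal (rate K X Y / total_rate K X) \<partial>count_space UNIV)"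
    by (simp add: jump_dist_def emeasure_density)
  also have "\<dots> = (\<Sum>Y\<in>S. ennreal (rate K X Y / total_rate K X))"
    by (rule nn_integral_count_space'[OF fS]) (auto simp: out)
  also have "\<dots> = ennreal (\<Sum>Y\<in>S. rate K X Y / total_rate K X)"
    using nn by (intro sum_ennreal) auto
  also have "\<dots> = 1"
    using q by (simp add: sum_divide_distrib[symmetric] sumS)
  finally show "emeasure (jump_dist K X) (space (jump_dist K X)) = 1" .
qed

text \<open>Kernels only need to be specified on \<open>\<ell>\<^sup>1_\<nat>\<close>: elsewhere we may replace them by the
  null measure, which makes them measurable as soon as they are sub-probabilities on \<open>\<ell>\<^sup>1_\<nat>\<close>.\<close>
definition restrict_l1N :: "(state \<Rightarrow> real measure) \<Rightarrow> state \<Rightarrow> real measure" where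
  "restrict_l1N H Z = (if in_l1N Z then H Z else null_measure borel)"

lemma restrict_l1N_measurable:
  assumes "\<And>Z. in_l1N Z \<Longrightarrow> subprob_space (H Z)" "\<And>Z. sets (H Z) = sets borel"
  shows "restrict_l1N H \<in> measurable (count_space UNIV) (subprob_algebra borel)"
  using assms by (auto simp: restrict_l1N_def space_subprob_algebra subprob_space_null_measure)

lemma jump_dist_bind_restrict:
  assumes X: "in_l1N X" "X \<noteq> (\<lambda>_. 0)" and H: "\<And>Z. sets (H Z) = sets borel"
  shows "jump_dist K X \<bind> H = jump_dist K X \<bind> restrict_l1N H"
  unfolding jump_dist_def
proof (rule bind_density_count_space_cong[where N=borel])
  fix Z assume "ennreal (rate K X Z / total_rate K X) \<noteq> 0"
  then have "rate K X Z \<noteq> 0" by auto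
  then show "H Z = restrict_l1N H Z"
    using rate_nonzero_in_l1N[OF _ X] by (simp add: restrict_l1N_def)
qed (auto simp: restrict_l1N_def H)

lemma sets_jump_dist[simp]: "sets (jump_dist K X) = sets (count_space UNIV)"
  by (simp add: jump_dist_def)

lemma space_jump_dist[simp]: "space (jump_dist K X) = UNIV"
  by (simp add: jump_dist_def)

lemma subprob_space_jump_dist_bind:
  fixes H :: "state \<Rightarrow> real measure"
  assumes Kpos: "\<And>a b. 1 \<le> a \<Longrightarrow> 1 \<le> b \<Longrightarrow> 0 \<le> K a b"
    and X: "in_l1N X" "X \<noteq> (\<lambda>_. 0)" "0 < total_rate K X"
    and H: "\<And>Z. in_l1N Z \<Longrightarrow> subprob_space (H Z)" "\<And>Z. sets (H Z) = sets borel"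
  shows "subprob_space (jump_dist K X \<bind> H)"
proof -
  have "restrict_l1N H \<in> measurable (jump_dist K X) (subprob_algebra borel)"
    by (subst measurable_cong_sets[OF sets_jump_dist refl]) (rule restrict_l1N_measurable[OF H])
  then have "subprob_space (jump_dist K X \<bind> restrict_l1N H)"
    using prob_space_jump_dist[OF Kpos X]
    by (intro subprob_space_bind[OF prob_space_imp_subprob_space])
  then show ?thesis
    by (simp add: jump_dist_bind_restrict[OF X(1,2) H(2)])
qed

lemma subprob_space_hit_law:
  assumes Kpos: "\<And>a b. 1 \<le> a \<Longrightarrow> 1 \<le> b \<Longrightarrow> 0 \<le> K a b" and A0: "A (\<lambda>_. 0)"
  shows "in_l1N X \<Longrightarrow> subprob_space (hit_law K A f X)"
proof (induction f arbitrary: X)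
  case 0
  then show ?case by (auto simp: subprob_space_return subprob_space_null_measure)
next
  case (Suc f)
  show ?case
  proof (cases "A X \<or> total_rate K X \<le> 0")
    case True
    then show ?thesis by (auto simp: hit_law_Suc subprob_space_return subprob_space_null_measure)
  next
    case False
    then have X: "X \<noteq> (\<lambda>_. 0)" "0 < total_rate K X" using A0 by auto
    have "subprob_space (jump_dist K X \<bind> hit_law K A f)"
      by (rule subprob_space_jump_dist_bind[OF Kpos Suc.prems X Suc.IH sets_hit_law])
    then show ?thesis using False
      by (auto simp: hit_law_Suc intro!: convolution_subprob_space prob_space_exponential_density)
  qed
qed

section \<open>Dilation of states\<close>

definition emb :: "nat \<Rightarrow> state \<Rightarrow> state" where
  "emb i Y = (\<lambda>k. if k mod i = 0 then Y (k div i) else 0)"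

lemma emb_mult[simp]: "0 < i \<Longrightarrow> emb i Y (i * m) = Y m"
  by (simp add: emb_def)

lemma emb_1[simp]: "emb 1 Y = Y"
  by (simp add: emb_def)

lemma emb_pos: "0 < emb i Y k \<Longrightarrow> k = i * (k div i) \<and> 0 < Y (k div i)"
  by (auto simp: emb_def split: if_splits)

lemma inj_emb: "0 < i \<Longrightarrow> inj (emb i)"
  by (rule injI) (metis emb_mult ext)

lemma emb_eq_iff[simp]: "0 < i \<Longrightarrow> emb i Y = emb i Z \<longleftrightarrow> Y = Z"
  using inj_emb by (auto dest: injD)

lemma in_l1N_emb_iff: assumes "0 < i" shows "in_l1N (emb i Y) \<longleftrightarrow> in_l1N Y"
proof -
  have supp: "{k. 0 < emb i Y k} = (*) i ` {m. 0 < Y m}"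
    using assms emb_pos by (auto simp: image_iff)
  have "inj_on ((*) i) {m. 0 < Y m}" using assms by (auto simp: inj_on_def)
  then have "finite {k. 0 < emb i Y k} \<longleftrightarrow> finite {m. 0 < Y m}"
    unfolding supp by (rule finite_image_iff)
  moreover have "emb i Y 0 = Y 0" using emb_mult[OF assms, of Y 0] by simp
  ultimately show ?thesis by (simp add: in_l1N_def)
qed

lemma merge_emb:
  assumes i: "0 < i"
  shows "merge (emb i Y) i (i * m) = emb i (merge Y 1 m)"
proof
  fix k
  show "merge (emb i Y) i (i * m) k = emb i (merge Y 1 m) k"
  proof (cases "k mod i = 0")
    case True
    then obtain t where t: "k = i * t" by auto
    have "i * t = i \<longleftrightarrow> t = 1" "i * t = i * m \<longleftrightarrow> t = m" "i * t = i + i * m \<longleftrightarrow> t = Suc m"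
      using i by (simp_all, metis mult_Suc_right nat_mult_eq_cancel1)
    then show ?thesis unfolding t merge_def using i by (simp add: emb_def)
  next
    case False
    then have "k \<noteq> i" "k \<noteq> i * m" "k \<noteq> i + i * m" by auto
    then show ?thesis using False by (simp add: merge_def emb_def)
  qed
qed

lemma ellX_emb:
  assumes i: "0 < i" and Y: "in_l1N Y" "0 < Y 1"
  shows "ellX (emb i Y) = i"
  unfolding ellX_def
proof (rule Least_equality)
  show "0 < emb i Y i" using emb_mult[OF i, of Y 1] Y by simp
  fix y assume "0 < emb i Y y"
  then have y: "y = i * (y div i)" "0 < Y (y div i)" using emb_pos by blast+
  then have "y div i \<noteq> 0" using Y(1) by (metis in_l1N_def less_irrefl)
  then show "i \<le> y" by (subst y(1)) simp
qed

lemma emb_stopped_iff: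
  assumes i: "0 < i"
  shows "(\<forall>k\<in>{1..i}. emb i Y k = 0) \<longleftrightarrow> Y 1 = 0"
proof
  assume "\<forall>k\<in>{1..i}. emb i Y k = 0"
  then show "Y 1 = 0" using emb_mult[OF i, of Y 1] i by auto
next
  assume Y: "Y 1 = 0"
  show "\<forall>k\<in>{1..i}. emb i Y k = 0"
  proof
    fix k assume k: "k \<in> {1..i}"
    show "emb i Y k = 0"
    proof (cases "k = i")
      case True then show ?thesis using emb_mult[OF i, of Y 1] Y by simp
    next
      case False
      then have "k mod i \<noteq> 0" using k by auto
      then show ?thesis by (simp add: emb_def)
    qed
  qed
qed

lemma emb_occupied_above:
  assumes i: "0 < i"
  shows "{j. i < j \<and> 0 < emb i Y j \<and> P j} = (*) i ` {m. 1 < m \<and> 0 < Y m \<and> P (i * m)}"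
proof
  show "{j. i < j \<and> 0 < emb i Y j \<and> P j} \<subseteq> (*) i ` {m. 1 < m \<and> 0 < Y m \<and> P (i * m)}"
  proof
    fix j assume j: "j \<in> {j. i < j \<and> 0 < emb i Y j \<and> P j}"
    then have e: "j = i * (j div i)" "0 < Y (j div i)" using emb_pos by blast+
    have "1 < j div i" using j e(1) i by (metis mem_Collect_eq nat_mult_less_cancel_disj nat_mult_1_right)
    then show "j \<in> (*) i ` {m. 1 < m \<and> 0 < Y m \<and> P (i * m)}"
      using e j by (auto simp: image_iff intro!: exI[of _ "j div i"])
  qed
  show "(*) i ` {m. 1 < m \<and> 0 < Y m \<and> P (i * m)} \<subseteq> {j. i < j \<and> 0 < emb i Y j \<and> P j}"
    using i by auto
qed

lemma min_phi_mult:
  fixes \<phi> :: "nat \<Rightarrow> real"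
  assumes incr: "mono_on {1..} \<phi>" and i: "0 < i" and m: "1 \<le> m"
  shows "min (\<phi> i) (\<phi> (i * m)) = \<phi> i"
proof -
  have "i \<le> i * m" using m by simp
  then have "\<phi> i \<le> \<phi> (i * m)" using i m by (intro mono_onD[OF incr]) auto
  then show ?thesis by simp
qed

lemma rate_emb:
  assumes incr: "mono_on {1..} \<phi>" and i: "0 < i" and Y: "in_l1N Y" "0 < Y 1"
  shows "rate (\<lambda>a b. min (\<phi> a) (\<phi> b)) (emb i Y) Z = \<phi> i *
     ((\<Sum>m\<in>{m. 1 < m \<and> 0 < Y m \<and> Z = emb i (merge Y 1 m)}. real (Y m))
      + (if 2 \<le> Y 1 \<and> Z = emb i (merge Y 1 1) then real (Y 1) - 1 else 0))"
proof -
  let ?S = "{m. 1 < m \<and> 0 < Y m \<and> Z = emb i (merge Y 1 m)}"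
  have occ: "{j. i < j \<and> 0 < emb i Y j \<and> Z = merge (emb i Y) i j} = (*) i ` ?S"
    using emb_occupied_above[OF i, of Y "\<lambda>j. Z = merge (emb i Y) i j"] merge_emb[OF i] by simp
  have inj: "inj_on ((*) i) ?S" using i by (auto simp: inj_on_def)
  have sum: "(\<Sum>j\<in>(*) i ` ?S. min (\<phi> i) (\<phi> j) * real (emb i Y j)) = (\<Sum>m\<in>?S. \<phi> i * real (Y m))"
    by (subst sum.reindex[OF inj]) (auto intro!: sum.cong simp: min_phi_mult[OF incr i] i)
  have "emb i Y i = Y 1" "merge (emb i Y) i i = emb i (merge Y 1 1)"
    using emb_mult[OF i, of Y 1] merge_emb[OF i, of Y 1] by simp_all
  then show ?thesis
    unfolding rate_def Let_def ellX_emb[OF i Y] occ sum by (simp add: sum_distrib_left distrib_left)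
qed

text \<open>Total rate of a state whose smallest particle has size 1, for the constant kernel 1.\<close>
definition unit_total :: "state \<Rightarrow> real" where
  "unit_total Y = (\<Sum>m\<in>{m. 1 < m \<and> 0 < Y m}. real (Y m)) + (real (Y 1) - 1)"

lemma total_rate_emb:
  assumes incr: "mono_on {1..} \<phi>" and i: "0 < i" and Y: "in_l1N Y" "0 < Y 1"
  shows "total_rate (\<lambda>a b. min (\<phi> a) (\<phi> b)) (emb i Y) = \<phi> i * unit_total Y"
proof -
  let ?S = "{m. 1 < m \<and> 0 < Y m}"
  have occ: "{j. i < j \<and> 0 < emb i Y j} = (*) i ` ?S"
    using emb_occupied_above[OF i, of Y "\<lambda>j. True"] by simp
  have inj: "inj_on ((*) i) ?S" using i by (auto simp: inj_on_def)
  have sum: "(\<Sum>j\<in>(*) i ` ?S. min (\<phi> i) (\<phi> j) * real (emb i Y j)) = (\<Sum>m\<in>?S. \<phi> i * real (Y m))"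
    by (subst sum.reindex[OF inj]) (auto intro!: sum.cong simp: min_phi_mult[OF incr i] i)
  have "emb i Y i = Y 1" using emb_mult[OF i, of Y 1] by simp
  then show ?thesis
    unfolding total_rate_def unit_total_def Let_def ellX_emb[OF i Y] occ sum
    by (simp add: sum_distrib_left distrib_left)
qed

text \<open>Consequently the jump distribution from the dilated state is the image under dilation
  of the jump distribution from the original state (the factor \<open>\<phi> i\<close> cancels).\<close>
lemma jump_dist_emb:
  assumes pos: "\<And>k. 1 \<le> k \<Longrightarrow> 0 < \<phi> k" and incr: "mono_on {1..} \<phi>"
    and i: "0 < i" and Y: "in_l1N Y" "0 < Y 1"
  defines "K \<equiv> (\<lambda>a b. min (\<phi> a) (\<phi> b))"
  shows "jump_dist K (emb i Y) = distr (jump_dist K Y) (count_space UNIV) (emb i)"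
  unfolding jump_dist_def
proof (rule density_count_space_inj_image[OF inj_emb[OF i]])
  have pi: "\<phi> i \<noteq> 0" "\<phi> 1 \<noteq> 0" using pos[of i] pos[of 1] i by auto
  have ti: "total_rate K (emb i Y) = \<phi> i * unit_total Y"
    unfolding K_def by (rule total_rate_emb[OF incr i Y])
  have t1: "total_rate K Y = \<phi> 1 * unit_total Y"
    using total_rate_emb[OF incr zero_less_one Y] unfolding emb_1 K_def .
  fix Z0
  let ?R = "(\<Sum>m\<in>{m. 1 < m \<and> 0 < Y m \<and> Z0 = merge Y 1 m}. real (Y m))
      + (if 2 \<le> Y 1 \<and> Z0 = merge Y 1 1 then real (Y 1) - 1 else 0)"
  have ri: "rate K (emb i Y) (emb i Z0) = \<phi> i * ?R"
    unfolding K_def rate_emb[OF incr i Y] using i by simp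
  have r1: "rate K Y Z0 = \<phi> 1 * ?R"
    using rate_emb[OF incr zero_less_one Y, of Z0] unfolding emb_1 K_def by simp
  show "ennreal (rate K (emb i Y) (emb i Z0) / total_rate K (emb i Y)) = ennreal (rate K Y Z0 / total_rate K Y)"
    unfolding ri r1 ti t1 using pi by simp
next
  fix Z assume Z: "Z \<notin> range (emb i)"
  then have none: "{m. 1 < m \<and> 0 < Y m \<and> Z = emb i (merge Y 1 m)} = {}" by auto
  have "rate K (emb i Y) Z = 0"
    unfolding K_def rate_emb[OF incr i Y] none using Z by auto
  then show "ennreal (rate K (emb i Y) Z / total_rate K (emb i Y)) = 0" by simp
qed

section \<open>Scaling of hitting-time laws\<close>

lemma jump_dist_bind_emb:
  fixes H1 Hi :: "state \<Rightarrow> real measure" and c :: real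
  assumes pos: "\<And>k. 1 \<le> k \<Longrightarrow> 0 < \<phi> k" and incr: "mono_on {1..} \<phi>"
    and i: "0 < i" and Y: "in_l1N Y" "0 < Y 1"
    and H1: "\<And>Z. in_l1N Z \<Longrightarrow> subprob_space (H1 Z)" "\<And>Z. sets (H1 Z) = sets borel"
    and Hi: "\<And>Z. in_l1N Z \<Longrightarrow> subprob_space (Hi Z)" "\<And>Z. sets (Hi Z) = sets borel"
    and scale: "\<And>Z. in_l1N Z \<Longrightarrow> Hi (emb i Z) = distr (H1 Z) borel (\<lambda>t. c * t)"
  defines "K \<equiv> (\<lambda>a b. min (\<phi> a) (\<phi> b))"
  shows "jump_dist K (emb i Y) \<bind> Hi = distr (jump_dist K Y \<bind> H1) borel (\<lambda>t. c * t)"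
proof -
  have Y0: "Y \<noteq> (\<lambda>_. 0)" using Y(2) by auto
  have eY: "in_l1N (emb i Y)" "emb i Y \<noteq> (\<lambda>_. 0)"
    using in_l1N_emb_iff[OF i] Y emb_mult[OF i, of Y 1] by (auto dest: fun_cong[of _ _ i])
  have R1: "restrict_l1N H1 \<in> measurable (jump_dist K Y) (subprob_algebra borel)"
    by (subst measurable_cong_sets[OF sets_jump_dist refl]) (rule restrict_l1N_measurable[OF H1])
  have Ri: "restrict_l1N Hi \<in> measurable (count_space UNIV) (subprob_algebra borel)"
    by (rule restrict_l1N_measurable[OF Hi])
  have Ri_emb: "restrict_l1N Hi (emb i Z) = distr (restrict_l1N H1 Z) borel (\<lambda>t. c * t)" for Z
    using scale[of Z] in_l1N_emb_iff[OF i, of Z]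
    by (simp add: restrict_l1N_def distr_null_measure_borel)
  have "jump_dist K (emb i Y) \<bind> Hi = jump_dist K (emb i Y) \<bind> restrict_l1N Hi"
    by (rule jump_dist_bind_restrict[OF eY Hi(2)])
  also have "\<dots> = distr (jump_dist K Y) (count_space UNIV) (emb i) \<bind> restrict_l1N Hi"
    using jump_dist_emb[OF pos incr i Y] by (simp add: K_def)
  also have "\<dots> = jump_dist K Y \<bind> (\<lambda>Z. restrict_l1N Hi (emb i Z))"
    by (rule bind_distr[OF _ Ri]) (auto simp: jump_dist_def)
  also have "\<dots> = jump_dist K Y \<bind> (\<lambda>Z. distr (restrict_l1N H1 Z) borel (\<lambda>t. c * t))"
    unfolding Ri_emb ..
  also have "\<dots> = distr (jump_dist K Y \<bind> restrict_l1N H1) borel (\<lambda>t. c * t)"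
    by (rule distr_bind[symmetric, OF R1]) simp_all
  also have "\<dots> = distr (jump_dist K Y \<bind> H1) borel (\<lambda>t. c * t)"
    unfolding jump_dist_bind_restrict[OF Y(1) Y0 H1(2)] ..
  finally show ?thesis .
qed

lemma total_rate_emb_ratio:
  assumes pos: "\<And>k. 1 \<le> k \<Longrightarrow> 0 < \<phi> k" and incr: "mono_on {1..} \<phi>"
    and i: "0 < i" and Y: "in_l1N Y" "0 < Y 1"
  defines "K \<equiv> (\<lambda>a b. min (\<phi> a) (\<phi> b))"
  shows "total_rate K (emb i Y) = total_rate K Y / (\<phi> 1 / \<phi> i)"
proof -
  have "total_rate K (emb i Y) = \<phi> i * unit_total Y"
    unfolding K_def by (rule total_rate_emb[OF incr i Y])
  moreover have "total_rate K Y = \<phi> 1 * unit_total Y"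
    using total_rate_emb[OF incr zero_less_one Y] unfolding emb_1 K_def .
  ultimately show ?thesis using pos[of 1] by simp
qed

text \<open>Inductive step of the scaling identity, for a state with a particle of size 1
  (the other states are already stopped).\<close>
lemma hit_law_emb_Suc:
  assumes pos: "\<And>k. 1 \<le> k \<Longrightarrow> 0 < \<phi> k" and incr: "mono_on {1..} \<phi>"
    and i: "0 < i" and Y: "in_l1N Y" "0 < Y 1"
  defines "K \<equiv> (\<lambda>a b. min (\<phi> a) (\<phi> b))" and "c \<equiv> \<phi> 1 / \<phi> i"
  assumes IH: "\<And>Z. in_l1N Z \<Longrightarrow> hit_law K (\<lambda>Y. \<forall>k\<in>{1..i}. Y k = 0) f (emb i Z)
      = distr (hit_law K (\<lambda>Y. \<forall>k\<in>{1..1}. Y k = 0) f Z) borel (\<lambda>t. c * t)"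
  shows "hit_law K (\<lambda>Y. \<forall>k\<in>{1..i}. Y k = 0) (Suc f) (emb i Y)
      = distr (hit_law K (\<lambda>Y. \<forall>k\<in>{1..1}. Y k = 0) (Suc f) Y) borel (\<lambda>t. c * t)"
proof -
  let ?Ai = "\<lambda>Y. \<forall>k\<in>{1..i}. Y k = 0"
  let ?A1 = "\<lambda>Y. \<forall>k\<in>{1..1}. (Y::state) k = 0"
  let ?E = "\<lambda>q. density lborel (\<lambda>x. ennreal (exponential_density q x))"
  have nA: "\<not> ?A1 Y" "\<not> ?Ai (emb i Y)" using Y(2) emb_stopped_iff[OF i, of Y] by auto
  have c: "0 < c" using pos i by (simp add: c_def)
  have Kpos: "\<And>a b. 1 \<le> a \<Longrightarrow> 1 \<le> b \<Longrightarrow> 0 \<le> K a b"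
    using pos by (auto simp: K_def intro: less_imp_le)
  have ratio: "total_rate K (emb i Y) = total_rate K Y / c"
    unfolding K_def c_def by (rule total_rate_emb_ratio[OF pos incr i Y])
  show ?thesis
  proof (cases "total_rate K Y \<le> 0")
    case True
    then have "total_rate K (emb i Y) \<le> 0" using c by (simp add: ratio divide_nonpos_pos)
    then show ?thesis
      using hit_law_Suc_absorbed[where A="?Ai", OF _ nA(2)] hit_law_Suc_absorbed[where A="?A1", OF True nA(1)]
      by (simp add: distr_null_measure_borel)
  next
    case False
    then have q: "0 < total_rate K Y" "0 < total_rate K (emb i Y)" using c by (simp_all add: ratio)
    have E: "?E (total_rate K (emb i Y)) = distr (?E (total_rate K Y)) borel (\<lambda>t. c * t)"
      using exponential_density_scale[OF c q(1)] by (simp add: ratio)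
    have B: "jump_dist K (emb i Y) \<bind> hit_law K ?Ai f
        = distr (jump_dist K Y \<bind> hit_law K ?A1 f) borel (\<lambda>t. c * t)"
      unfolding K_def
      by (rule jump_dist_bind_emb[OF pos incr i Y])
        (use IH Kpos in \<open>auto simp: K_def intro: subprob_space_hit_law\<close>)
    have fin: "finite_measure (?E (total_rate K Y))" "finite_measure (jump_dist K Y \<bind> hit_law K ?A1 f)"
      using prob_space_exponential_density[OF q(1)]
        subprob_space_jump_dist_bind[OF Kpos Y(1) _ q(1), of "hit_law K ?A1 f"]
        subprob_space_hit_law[OF Kpos] Y(2)
      by (auto simp: prob_space_def subprob_space_def)
    have "hit_law K ?Ai (Suc f) (emb i Y)
        = (?E (total_rate K (emb i Y)) \<star> (jump_dist K (emb i Y) \<bind> hit_law K ?Ai f))"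
      by (rule hit_law_Suc_active[where A="?Ai", OF q(2) nA(2)])
    also have "\<dots> = (distr (?E (total_rate K Y)) borel (\<lambda>t. c * t)
        \<star> distr (jump_dist K Y \<bind> hit_law K ?A1 f) borel (\<lambda>t. c * t))"
      unfolding E B ..
    also have "\<dots> = distr (?E (total_rate K Y) \<star> (jump_dist K Y \<bind> hit_law K ?A1 f)) borel (\<lambda>t. c * t)"
      by (rule convolution_scale[symmetric, OF fin]) simp_all
    also have "\<dots> = distr (hit_law K ?A1 (Suc f) Y) borel (\<lambda>t. c * t)"
      unfolding hit_law_Suc_active[where A="?A1", OF q(1) nA(1)] ..
    finally show ?thesis .
  qed
qed

lemma hit_law_emb:
  assumes pos: "\<And>k. 1 \<le> k \<Longrightarrow> 0 < \<phi> k" and incr: "mono_on {1..} \<phi>" and i: "0 < i"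
  defines "K \<equiv> (\<lambda>a b. min (\<phi> a) (\<phi> b))" and "c \<equiv> \<phi> 1 / \<phi> i"
  shows "in_l1N Y \<Longrightarrow> hit_law K (\<lambda>Y. \<forall>k\<in>{1..i}. Y k = 0) f (emb i Y)
           = distr (hit_law K (\<lambda>Y. \<forall>k\<in>{1..1}. Y k = 0) f Y) borel (\<lambda>t. c * t)"
proof (induction f arbitrary: Y)
  case 0
  show ?case
    using emb_stopped_iff[OF i, of Y] by (simp add: distr_return_zero_scale distr_null_measure_borel)
next
  case (Suc f Y)
  show ?case
  proof (cases "Y 1 = 0")
    case True
    then show ?thesis
      using emb_stopped_iff[OF i, of Y] by (simp add: hit_law_stopped distr_return_zero_scale)
  next
    case False
    then show ?thesis
      unfolding K_def c_def by (intro hit_law_emb_Suc[OF pos incr i Suc.prems] Suc.IH[unfolded K_def c_def]) auto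
  qed
qed

lemma scale_unit_seq_emb:
  assumes i: "0 < i"
  shows "scale_seq n (\<e> i) = emb i (scale_seq n (\<e> 1))"
proof
  fix k
  have "k mod i = 0 \<Longrightarrow> k div i = 1 \<Longrightarrow> k = i"
    using div_mult_mod_eq[of k i] by simp
  then show "scale_seq n (\<e> i) k = emb i (scale_seq n (\<e> 1)) k"
    using i by (auto simp: scale_seq_def unit_seq_def emb_def)
qed

lemma support_scale_unit_seq: "0 < n \<Longrightarrow> {k. 0 < scale_seq n (\<e> j) k} = {j}"
  by (auto simp: scale_seq_def unit_seq_def)

lemma npart_scale_unit_seq: "0 < n \<Longrightarrow> npart (scale_seq n (\<e> j)) = n"
  by (simp add: npart_def support_scale_unit_seq) (simp add: scale_seq_def unit_seq_def)

lemma in_l1N_scale_unit_seq: "0 < n \<Longrightarrow> 1 \<le> j \<Longrightarrow> in_l1N (scale_seq n (\<e> j))"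
  by (simp add: in_l1N_def support_scale_unit_seq) (simp add: scale_seq_def unit_seq_def)

theorem lemma5p3:
  fixes \<phi> :: "nat \<Rightarrow> real" and n i :: nat
  assumes pos: "\<And>k. 1 \<le> k \<Longrightarrow> 0 < \<phi> k"
    and incr: "mono_on {1..} \<phi>"
    and n: "2 \<le> n" and i: "1 \<le> i"
  shows "T_law (\<lambda>a b. min (\<phi> a) (\<phi> b)) i (scale_seq n (\<e> i))
       = distr (T_law (\<lambda>a b. min (\<phi> a) (\<phi> b)) 1 (scale_seq n (\<e> 1))) borel
               (\<lambda>t. \<phi> 1 / \<phi> i * t)"
proof -
  have n0: "0 < n" and i0: "0 < i" using n i by auto
  have "T_law (\<lambda>a b. min (\<phi> a) (\<phi> b)) i (scale_seq n (\<e> i))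
      = hit_law (\<lambda>a b. min (\<phi> a) (\<phi> b)) (\<lambda>Y. \<forall>k\<in>{1..i}. Y k = 0) n
          (emb i (scale_seq n (\<e> 1)))"
    unfolding T_law_def npart_scale_unit_seq[OF n0] unfolding scale_unit_seq_emb[OF i0] ..
  also have "\<dots> = distr (hit_law (\<lambda>a b. min (\<phi> a) (\<phi> b)) (\<lambda>Y. \<forall>k\<in>{1..1}. Y k = 0) n
          (scale_seq n (\<e> 1))) borel (\<lambda>t. \<phi> 1 / \<phi> i * t)"
    by (rule hit_law_emb[OF pos incr i0 in_l1N_scale_unit_seq[OF n0 order_refl]])
  also have "\<dots> = distr (T_law (\<lambda>a b. min (\<phi> a) (\<phi> b)) 1 (scale_seq n (\<e> 1))) borel
               (\<lambda>t. \<phi> 1 / \<phi> i * t)"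
    unfolding T_law_def npart_scale_unit_seq[OF n0] ..
  finally show ?thesis .
qed

end
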